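(* Let $N, D$ be positive integers and fix $\varsigma>0$. Let $\mathcal{G}$ be the complete graph on $N$ nodes, let $\tilde{\mathbf{A}} = \big(\mathbb{1}_{i\sim j \vee i=j}/\sqrt{\deg(v_i)\deg(v_j)}\big)_{i,j=1}^N$, and let $\mathbf{W}$ be a $D\times D$ random matrix with i.i.d. entries $W_{i,j}\sim N(0,\varsigma^2)$. If $\varsigma < 1/(9D^{3/2})$, then the map $\mathcal{L}^{\mathrm{conv+r}}_{\mathcal{G},\mathbf{W}}:\mathbb{R}^{N\times D}\to\mathbb{R}^{N\times D}$, $\mathbf{X}\mapsto \tilde{\mathbf{A}}\mathbf{X}\mathbf{W} + \mathbf{X}$, is injective with probability at least $1 - e^{-D/2}$.
   Context: $i\sim j$ means $v_i$ and $v_j$ are adjacent; degrees count the self-loop, so that for the complete graph every entry of $\tilde{\mathbf{A}}$ equals $1/N$. *)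

theory Defs
  imports "HOL-Probability.Probability"
begin

text \<open>Matrices are functions nat => nat => real, meaningful on the
  index box; an N x D matrix is one vanishing outside {..<N} x {..<D}.\<close>

definition complete_graph :: "nat \<Rightarrow> nat \<Rightarrow> nat \<Rightarrow> bool" where
  "complete_graph N i j \<longleftrightarrow> i < N \<and> j < N \<and> i \<noteq> j"

definition deg_sl :: "nat \<Rightarrow> (nat \<Rightarrow> nat \<Rightarrow> bool) \<Rightarrow> nat \<Rightarrow> nat" where
  "deg_sl N E i = card {j. j < N \<and> (E i j \<or> i = j)}"

definition norm_adj :: "nat \<Rightarrow> (nat \<Rightarrow> nat \<Rightarrow> bool) \<Rightarrow> nat \<Rightarrow> nat \<Rightarrow> real" where
  "norm_adj N E i j =
     (if i < N \<and> j < N \<and> (E i j \<or> i = j)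
      then 1 / sqrt (real (deg_sl N E i) * real (deg_sl N E j)) else 0)"

definition mats :: "nat \<Rightarrow> nat \<Rightarrow> (nat \<Rightarrow> nat \<Rightarrow> real) set" where
  "mats n m = {X. \<forall>i j. \<not> (i < n \<and> j < m) \<longrightarrow> X i j = 0}"

definition conv_res ::
  "nat \<Rightarrow> nat \<Rightarrow> (nat \<Rightarrow> nat \<Rightarrow> real) \<Rightarrow> (nat \<times> nat \<Rightarrow> real) \<Rightarrow>
   (nat \<Rightarrow> nat \<Rightarrow> real) \<Rightarrow> (nat \<Rightarrow> nat \<Rightarrow> real)" where
  "conv_res N D A W X = (\<lambda>i j. if i < N \<and> j < D then
      (\<Sum>k<N. \<Sum>l<D. A i k * X k l * W (l, j)) + X i j else 0)"

definition gauss_mat :: "nat \<Rightarrow> real \<Rightarrow> (nat \<times> nat \<Rightarrow> real) measure" where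
  "gauss_mat D s = PiM ({..<D} \<times> {..<D}) (\<lambda>_. density lborel (normal_density 0 s))"

end

theory Submission
  imports Defs "Jordan_Normal_Form.Determinant"
begin

(* For the complete graph every entry of the normalized adjacency matrix is 1/N, so
   A X W + X = 0 forces every row of X to be -m W, where m is the vector of column means
   of X; averaging the rows gives m + m W = 0.  Hence the layer is injective as soon as
   I + W^T has trivial kernel, which holds whenever all entries of W are smaller than 1/D
   in absolute value: a largest coordinate of a kernel vector would dominate itself.
   By Markov's inequality for the 2D-th Gaussian moment, a single entry exceeds 1/D with
   probability at most (s^2 D^3)^D, which is at most 81^(-D) under the assumption on s.
   By independence and Bernoulli's inequality all D^2 entries are small with probability
   at least 1 - D^2 81^(-D), and D^2 81^(-D) <= (4/81)^D <= e^(-D/2). *)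

unbundle no vec_syntax

lemma fact_double_le: "fact (2 * n) \<le> fact n * (2 * n) ^ n"
proof -
  have "fact (2 * n) = fact n * (fact (2 * n) div fact n :: nat)"
    by (simp add: fact_dvd)
  also have "\<dots> \<le> fact n * (2 * n) ^ n"
    using fact_div_fact_le_pow[of n "2 * n"] by (intro mult_left_mono) auto
  finally show ?thesis .
qed

lemma normal_even_moment_le:
  fixes s :: real
  assumes "s \<noteq> 0"
  shows "fact (2 * k) / ((2 / s\<^sup>2) ^ k * fact k) \<le> (real k * s\<^sup>2) ^ k"
proof -
  have "(fact (2 * k) :: real) \<le> fact k * (2 * real k) ^ k"
    using of_nat_mono[OF fact_double_le[of k]] by (simp add: of_nat_fact)
  then have "fact (2 * k) / ((2 / s\<^sup>2) ^ k * fact k) \<le> (2 * real k) ^ k / (2 / s\<^sup>2) ^ k"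
    using assms by (simp add: divide_simps mult.commute)
  also have "\<dots> = (real k * s\<^sup>2) ^ k"
    using assms by (simp add: power_divide power_mult_distrib field_simps)
  finally show ?thesis .
qed

lemma normal_tail_le:
  fixes s t :: real
  assumes s: "0 < s" and t: "0 < t" and k: "0 < k"
  shows "measure (density lborel (normal_density 0 s)) {x. t \<le> \<bar>x\<bar>}
           \<le> (real k * s\<^sup>2 / t\<^sup>2) ^ k"
proof -
  let ?G = "density lborel (normal_density 0 s)"
  let ?m = "fact (2 * k) / ((2 / s\<^sup>2) ^ k * fact k) :: real"
  have moment: "has_bochner_integral ?G (\<lambda>x. x ^ (2 * k)) ?m"
    using normal_moment_even[OF s, of 0 k] by (intro has_bochner_integral_density) auto
  have "{x \<in> space ?G. t ^ (2 * k) \<le> x ^ (2 * k)} = {x. t \<le> \<bar>x\<bar>}"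
  proof -
    have "t ^ (2 * k) \<le> x ^ (2 * k) \<longleftrightarrow> t \<le> \<bar>x\<bar>" for x
      using t k power_mono_iff[of t "\<bar>x\<bar>" "2 * k"] by (simp add: power_even_abs)
    then show ?thesis by auto
  qed
  then have "measure ?G {x. t \<le> \<bar>x\<bar>} \<le> ?m / t ^ (2 * k)"
    using integral_Markov_inequality_measure[where A="space ?G" and M="?G" and u="\<lambda>x. x ^ (2 * k)"
        and c = "t ^ (2 * k)"] moment t
    by (simp add: has_bochner_integral_iff zero_le_even_power)
  also have "\<dots> \<le> (real k * s\<^sup>2) ^ k / (t\<^sup>2) ^ k"
    unfolding power_mult using normal_even_moment_le[of s k] s by (intro divide_right_mono) auto
  finally show ?thesis by (simp add: power_divide)
qed

lemma square_mult_pow_le_exp: "real (n * n) * (1 / 81) ^ n \<le> exp (- real n / 2)"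
proof -
  have "n * n \<le> 2 ^ n * 2 ^ n"
    using less_exp[of n] by (intro mult_mono) auto
  also have "\<dots> = 4 ^ n"
    by (simp flip: power_mult_distrib)
  finally have "real (n * n) \<le> 4 ^ n"
    by (metis of_nat_le_iff of_nat_numeral of_nat_power)
  then have "real (n * n) * (1 / 81) ^ n \<le> (4 / 81) ^ n"
    by (simp add: power_divide divide_right_mono)
  also have "\<dots> \<le> exp (- 1 / 2) ^ n"
    using exp_ge_add_one_self[of "- 1 / 2 :: real"] by (intro power_mono) auto
  finally show ?thesis by (simp flip: exp_of_nat_mult)
qed

lemma normal_tail_inverse_dim_le:
  fixes s :: real
  assumes D: "0 < D" and s: "0 < s" and small: "s < 1 / (9 * real D powr (3/2))"
  shows "measure (density lborel (normal_density 0 s)) {x. 1 / real D \<le> \<bar>x\<bar>} \<le> (1 / 81) ^ D"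
proof -
  have "(real D powr (3/2))\<^sup>2 = real D powr 3"
    using D by (simp add: powr_powr flip: powr_realpow[of _ 2])
  also have "\<dots> = real D ^ 3"
    using D by (simp add: powr_realpow)
  moreover have "0 \<le> s * (9 * real D powr (3/2))" "s * (9 * real D powr (3/2)) < 1"
    using s small D by (simp_all add: field_simps)
  then have "(s * (9 * real D powr (3/2)))\<^sup>2 < 1\<^sup>2"
    by (intro power_strict_mono) auto
  ultimately have "s\<^sup>2 * real D ^ 3 \<le> 1 / 81"
    by (simp add: power_mult_distrib)
  moreover have "real D * s\<^sup>2 / (1 / real D)\<^sup>2 = s\<^sup>2 * real D ^ 3"
    by (simp add: power2_eq_square power3_eq_cube)
  ultimately have "(real D * s\<^sup>2 / (1 / real D)\<^sup>2) ^ D \<le> (1 / 81) ^ D"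
    by (intro power_mono) auto
  moreover have "measure (density lborel (normal_density 0 s)) {x. 1 / real D \<le> \<bar>x\<bar>}
      \<le> (real D * s\<^sup>2 / (1 / real D)\<^sup>2) ^ D"
    using D by (intro normal_tail_le[OF s _ D]) simp
  ultimately show ?thesis
    by linarith
qed

definition id_plus_transpose_kernel_trivial :: "nat \<Rightarrow> (nat \<times> nat \<Rightarrow> real) \<Rightarrow> bool" where
  "id_plus_transpose_kernel_trivial D W \<longleftrightarrow>
     (\<forall>v. (\<forall>j<D. v j + (\<Sum>l<D. W (l, j) * v l) = 0) \<longrightarrow> (\<forall>j<D. v j = 0))"

(* The matrix I + W^T is only needed for measurability: its determinant is a polynomial
   in the entries of W. *)
definition id_plus_transpose :: "nat \<Rightarrow> (nat \<times> nat \<Rightarrow> real) \<Rightarrow> real mat" where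
  "id_plus_transpose D W = mat D D (\<lambda>(j, l). (if j = l then 1 else 0) + W (l, j))"

lemma id_plus_transpose_carrier: "id_plus_transpose D W \<in> carrier_mat D D"
  by (simp add: id_plus_transpose_def)

lemma id_plus_transpose_mult_vec:
  assumes "v \<in> carrier_vec D" "j < D"
  shows "(id_plus_transpose D W *\<^sub>v v) $ j = v $ j + (\<Sum>l<D. W (l, j) * v $ l)"
proof -
  have "(id_plus_transpose D W *\<^sub>v v) $ j
      = (\<Sum>l<D. (if j = l then v $ l else 0) + W (l, j) * v $ l)"
    using assms
    by (auto simp: id_plus_transpose_def scalar_prod_def lessThan_atLeast0 distrib_right intro!: sum.cong)
  also have "\<dots> = v $ j + (\<Sum>l<D. W (l, j) * v $ l)"
    using assms by (simp add: sum.distrib)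
  finally show ?thesis .
qed

lemma id_plus_transpose_kernel_trivial_iff_det:
  "id_plus_transpose_kernel_trivial D W \<longleftrightarrow> det (id_plus_transpose D W) \<noteq> 0"
proof -
  have "(\<exists>v \<in> carrier_vec D. v \<noteq> 0\<^sub>v D \<and> id_plus_transpose D W *\<^sub>v v = 0\<^sub>v D)
      \<longleftrightarrow> (\<exists>f. (\<forall>j<D. f j + (\<Sum>l<D. W (l, j) * f l) = 0) \<and> \<not> (\<forall>j<D. f j = 0))"
  proof
    assume "\<exists>v \<in> carrier_vec D. v \<noteq> 0\<^sub>v D \<and> id_plus_transpose D W *\<^sub>v v = 0\<^sub>v D"
    then obtain v where v: "v \<in> carrier_vec D" "v \<noteq> 0\<^sub>v D" "id_plus_transpose D W *\<^sub>v v = 0\<^sub>v D"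
      by blast
    have "\<forall>j<D. v $ j + (\<Sum>l<D. W (l, j) * v $ l) = 0"
      using v(3) id_plus_transpose_mult_vec[OF v(1)] by (metis index_zero_vec(1))
    moreover have "\<not> (\<forall>j<D. v $ j = 0)"
      using v(1,2) by (auto simp: vec_eq_iff)
    ultimately show "\<exists>f. (\<forall>j<D. f j + (\<Sum>l<D. W (l, j) * f l) = 0) \<and> \<not> (\<forall>j<D. f j = 0)"
      by blast
  next
    assume "\<exists>f. (\<forall>j<D. f j + (\<Sum>l<D. W (l, j) * f l) = 0) \<and> \<not> (\<forall>j<D. f j = 0)"
    then obtain f where f: "\<forall>j<D. f j + (\<Sum>l<D. W (l, j) * f l) = 0" "\<not> (\<forall>j<D. f j = 0)"
      by blast
    have "vec D f \<noteq> 0\<^sub>v D"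
      using f(2) by (auto simp: vec_eq_iff)
    moreover have "id_plus_transpose D W *\<^sub>v vec D f = 0\<^sub>v D"
    proof (rule eq_vecI)
      fix j assume "j < dim_vec (0\<^sub>v D :: real vec)"
      then show "(id_plus_transpose D W *\<^sub>v vec D f) $ j = 0\<^sub>v D $ j"
        using f(1) id_plus_transpose_mult_vec[of "vec D f" D j W] by simp
    qed (simp add: id_plus_transpose_def)
    ultimately show "\<exists>v \<in> carrier_vec D. v \<noteq> 0\<^sub>v D \<and> id_plus_transpose D W *\<^sub>v v = 0\<^sub>v D"
      by auto
  qed
  then show ?thesis
    unfolding id_plus_transpose_kernel_trivial_def
      det_0_iff_vec_prod_zero[OF id_plus_transpose_carrier] by blast
qed

lemma det_id_plus_transpose:
  "det (id_plus_transpose D W) = (\<Sum>p | p permutes {0..<D}. signof p *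
     (\<Prod>i = 0..<D. (if i = p i then 1 else 0) + W (p i, i)))"
  unfolding det_def'[OF id_plus_transpose_carrier]
proof (intro sum.cong refl arg_cong[where f="\<lambda>x. signof _ * x"] prod.cong)
  fix p i assume "p \<in> {p. p permutes {0..<D}}" and i: "i \<in> {0..<D}"
  then have "p i < D" using permutes_in_image by fastforce
  then show "id_plus_transpose D W $$ (i, p i) = (if i = p i then 1 else 0) + W (p i, i)"
    using i by (simp add: id_plus_transpose_def)
qed

lemma det_id_plus_transpose_measurable:
  assumes "sets M = sets borel"
  shows "(\<lambda>W. det (id_plus_transpose D W)) \<in> borel_measurable (PiM ({..<D} \<times> {..<D}) (\<lambda>_. M))"
  unfolding det_id_plus_transpose
proof (intro borel_measurable_sum borel_measurable_times borel_measurable_prod borel_measurable_add)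
  fix p i assume "p \<in> {p. p permutes {0..<D}}" and i: "i \<in> {0..<D}"
  then have "(p i, i) \<in> {..<D} \<times> {..<D}" using permutes_in_image by fastforce
  then show "(\<lambda>W. W (p i, i)) \<in> borel_measurable (PiM ({..<D} \<times> {..<D}) (\<lambda>_. M))"
    using measurable_component_singleton[of "(p i, i)" "{..<D} \<times> {..<D}" "\<lambda>_. M"]
    by (simp add: measurable_cong_sets[OF refl assms])
qed auto

lemma small_entries_kernel_trivial:
  assumes D: "0 < D" and small: "\<And>l j. l < D \<Longrightarrow> j < D \<Longrightarrow> \<bar>W (l, j)\<bar> < 1 / real D"
  shows "id_plus_transpose_kernel_trivial D W"
  unfolding id_plus_transpose_kernel_trivial_def
proof (rule allI, rule impI)
  fix v :: "nat \<Rightarrow> real" assume v: "\<forall>j<D. v j + (\<Sum>l<D. W (l, j) * v l) = 0"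
  define M where "M = Max ((\<lambda>j. \<bar>v j\<bar>) ` {..<D})"
  have le_M: "\<bar>v j\<bar> \<le> M" if "j < D" for j
    using that by (auto simp: M_def)
  have "M \<in> (\<lambda>j. \<bar>v j\<bar>) ` {..<D}"
    unfolding M_def using D by (intro Max_in) auto
  then obtain j0 where j0: "j0 < D" "\<bar>v j0\<bar> = M"
    by auto
  have "M \<le> 0"
  proof (rule ccontr)
    assume "\<not> M \<le> 0"
    then have M: "0 < M" by simp
    have "M = \<bar>\<Sum>l<D. W (l, j0) * v l\<bar>"
      using v j0 by (metis abs_minus_cancel add_eq_0_iff)
    also have "\<dots> \<le> (\<Sum>l<D. \<bar>W (l, j0)\<bar> * \<bar>v l\<bar>)"
      by (rule order_trans[OF sum_abs]) (simp add: abs_mult)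
    also have "\<dots> < (\<Sum>l<D. M / real D)"
    proof (rule sum_strict_mono)
      fix l assume l: "l \<in> {..<D}"
      have "\<bar>W (l, j0)\<bar> * \<bar>v l\<bar> \<le> \<bar>W (l, j0)\<bar> * M"
        using le_M l by (simp add: mult_left_mono)
      also have "\<dots> < M / real D"
        using mult_strict_right_mono[OF small[of l j0] M] l j0 by simp
      finally show "\<bar>W (l, j0)\<bar> * \<bar>v l\<bar> < M / real D" .
    qed (use D in auto)
    also have "\<dots> = M"
      using D by simp
    finally show False by simp
  qed
  then show "\<forall>j<D. v j = 0"
    using le_M by (meson abs_le_zero_iff order_trans)
qed

lemma deg_sl_complete_graph: "i < N \<Longrightarrow> deg_sl N (complete_graph N) i = N"
proof -
  assume "i < N"
  then have "{j. j < N \<and> (complete_graph N i j \<or> i = j)} = {..<N}"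
    by (auto simp: complete_graph_def)
  then show ?thesis by (simp add: deg_sl_def)
qed

lemma norm_adj_complete_graph:
  "i < N \<Longrightarrow> k < N \<Longrightarrow> norm_adj N (complete_graph N) i k = 1 / real N"
  by (simp add: norm_adj_def deg_sl_complete_graph real_sqrt_mult complete_graph_def)

lemma conv_res_complete_graph:
  assumes "i < N" "j < D"
  shows "conv_res N D (norm_adj N (complete_graph N)) W X i j
     = (\<Sum>l<D. (\<Sum>k<N. X k l) / real N * W (l, j)) + X i j"
proof -
  have "(\<Sum>k<N. \<Sum>l<D. norm_adj N (complete_graph N) i k * X k l * W (l, j))
      = (\<Sum>l<D. \<Sum>k<N. X k l * W (l, j) / real N)"
    using assms by (subst sum.swap) (simp add: norm_adj_complete_graph)
  also have "\<dots> = (\<Sum>l<D. (\<Sum>k<N. X k l) / real N * W (l, j))"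
    by (simp add: sum_distrib_right sum_divide_distrib)
  finally show ?thesis
    using assms by (simp add: conv_res_def)
qed

lemma inj_on_conv_res_complete_graph_iff:
  assumes N: "0 < N"
  shows "inj_on (conv_res N D (norm_adj N (complete_graph N)) W) (mats N D)
           \<longleftrightarrow> id_plus_transpose_kernel_trivial D W"
proof
  let ?L = "conv_res N D (norm_adj N (complete_graph N)) W"
  assume inj: "inj_on ?L (mats N D)"
  show "id_plus_transpose_kernel_trivial D W"
    unfolding id_plus_transpose_kernel_trivial_def
  proof (intro allI impI)
    fix v :: "nat \<Rightarrow> real" and j
    assume v: "\<forall>j<D. v j + (\<Sum>l<D. W (l, j) * v l) = 0" and j: "j < D"
    define X where "X = (\<lambda>i j. if i < N \<and> j < D then v j else 0)"
    have column_sum: "(\<Sum>k<N. X k l) = real N * v l" if "l < D" for l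
      using that by (simp add: X_def)
    have "?L X = ?L (\<lambda>_ _. 0)"
    proof (intro ext)
      fix i j
      show "?L X i j = ?L (\<lambda>_ _. 0) i j"
      proof (cases "i < N \<and> j < D")
        case True
        then have "?L X i j = v j + (\<Sum>l<D. W (l, j) * v l)"
          using N by (simp add: conv_res_complete_graph column_sum X_def mult.commute)
        with True v show ?thesis
          by (simp add: conv_res_complete_graph)
      qed (auto simp: conv_res_def)
    qed
    moreover have "X \<in> mats N D" "(\<lambda>_ _. 0) \<in> mats N D"
      by (auto simp: X_def mats_def)
    ultimately have "X 0 j = 0"
      using inj by (metis inj_onD)
    then show "v j = 0"
      using N j by (simp add: X_def)
  qed
next
  assume kernel: "id_plus_transpose_kernel_trivial D W"
  show "inj_on (conv_res N D (norm_adj N (complete_graph N)) W) (mats N D)"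
  proof (rule inj_onI)
    fix X Y assume X: "X \<in> mats N D" and Y: "Y \<in> mats N D"
      and eq: "conv_res N D (norm_adj N (complete_graph N)) W X
             = conv_res N D (norm_adj N (complete_graph N)) W Y"
    define m where "m l = (\<Sum>k<N. X k l - Y k l) / real N" for l
    have diff: "X i j - Y i j = - (\<Sum>l<D. W (l, j) * m l)" if "i < N" "j < D" for i j
    proof -
      have "(\<Sum>l<D. W (l, j) * m l)
          = (\<Sum>l<D. (\<Sum>k<N. X k l) / real N * W (l, j)) - (\<Sum>l<D. (\<Sum>k<N. Y k l) / real N * W (l, j))"
        by (simp add: m_def sum_subtractf right_diff_distrib diff_divide_distrib mult.commute)
      then show ?thesis
        using fun_cong[OF fun_cong[OF eq, of i], of j] that by (simp add: conv_res_complete_graph)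
    qed
    \<comment> \<open>averaging the rows of \<open>X - Y\<close> shows that the column mean \<open>m\<close> lies in the kernel\<close>
    have "\<forall>j<D. m j + (\<Sum>l<D. W (l, j) * m l) = 0"
    proof (intro allI impI)
      fix j assume j: "j < D"
      have "m j = (\<Sum>k<N. - (\<Sum>l<D. W (l, j) * m l)) / real N"
        using diff j by (simp add: m_def[of j])
      also have "\<dots> = - (\<Sum>l<D. W (l, j) * m l)"
        using N by simp
      finally show "m j + (\<Sum>l<D. W (l, j) * m l) = 0" by simp
    qed
    with kernel have m: "\<forall>j<D. m j = 0"
      by (simp add: id_plus_transpose_kernel_trivial_def)
    show "X = Y"
    proof (intro ext)
      fix i j
      show "X i j = Y i j"
        using diff[of i j] m X Y by (cases "i < N \<and> j < D") (auto simp: mats_def)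
    qed
  qed
qed

lemma prob_space_gauss_mat: "0 < s \<Longrightarrow> prob_space (gauss_mat D s)"
  unfolding gauss_mat_def by (intro prob_space_PiM prob_space_normal_density)

lemma sets_gauss_mat_kernel_trivial:
  "{W \<in> space (gauss_mat D s). id_plus_transpose_kernel_trivial D W} \<in> sets (gauss_mat D s)"
proof -
  have "(\<lambda>W. det (id_plus_transpose D W)) \<in> borel_measurable (gauss_mat D s)"
    unfolding gauss_mat_def by (intro det_id_plus_transpose_measurable) simp
  then show ?thesis
    unfolding id_plus_transpose_kernel_trivial_iff_det by measurable
qed

lemma small_entries_subset_kernel_trivial:
  assumes "0 < D"
  shows "PiE ({..<D} \<times> {..<D}) (\<lambda>_. {x. \<bar>x\<bar> < 1 / real D})
           \<subseteq> {W \<in> space (gauss_mat D s). id_plus_transpose_kernel_trivial D W}"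
proof
  fix W assume W: "W \<in> PiE ({..<D} \<times> {..<D}) (\<lambda>_. {x. \<bar>x\<bar> < 1 / real D})"
  then have "id_plus_transpose_kernel_trivial D W"
    by (intro small_entries_kernel_trivial[OF assms]) (auto simp: PiE_iff)
  with W show "W \<in> {W \<in> space (gauss_mat D s). id_plus_transpose_kernel_trivial D W}"
    by (auto simp: gauss_mat_def space_PiM)
qed

lemma gauss_mat_small_entries_ge:
  fixes s t :: real
  assumes s: "0 < s"
  shows "measure (gauss_mat D s) (PiE ({..<D} \<times> {..<D}) (\<lambda>_. {x. \<bar>x\<bar> < t}))
           \<ge> 1 - real (D * D) * measure (density lborel (normal_density 0 s)) {x. t \<le> \<bar>x\<bar>}"
proof -
  let ?G = "density lborel (normal_density 0 s)"
  let ?r = "measure ?G {x. t \<le> \<bar>x\<bar>}"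
  interpret G: prob_space ?G
    using s by (rule prob_space_normal_density)
  interpret P: finite_product_prob_space "\<lambda>_. ?G" "{..<D} \<times> {..<D}"
    by unfold_locales simp
  have "measure ?G {x. \<bar>x\<bar> < t} = measure ?G (space ?G - {x. t \<le> \<bar>x\<bar>})"
    by (intro arg_cong[where f="measure ?G"]) auto
  also have "\<dots> = 1 - ?r"
    by (rule G.prob_compl) simp
  finally have "measure ?G {x. \<bar>x\<bar> < t} = 1 - ?r" .
  then have "measure (gauss_mat D s) (PiE ({..<D} \<times> {..<D}) (\<lambda>_. {x. \<bar>x\<bar> < t})) = (1 - ?r) ^ (D * D)"
    using P.finite_measure_PiM_emb[of "\<lambda>_. {x. \<bar>x\<bar> < t}"] by (simp add: gauss_mat_def)
  moreover have "1 - real (D * D) * ?r \<le> (1 - ?r) ^ (D * D)"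
    using Bernoulli_inequality[of "- ?r" "D * D"] by simp
  ultimately show ?thesis by simp
qed

theorem lemma3:
  fixes N D :: nat and s :: real
  assumes "0 < N" and "0 < D" and "0 < s"
    and "s < 1 / (9 * real D powr (3/2))"
  shows "measure (gauss_mat D s)
           {W \<in> space (gauss_mat D s).
              inj_on (conv_res N D (norm_adj N (complete_graph N)) W) (mats N D)}
         \<ge> 1 - exp (- real D / 2)"
proof -
  note N = assms(1) and D = assms(2) and s = assms(3) and small = assms(4)
  let ?M = "gauss_mat D s"
  let ?box = "PiE ({..<D} \<times> {..<D}) (\<lambda>_. {x :: real. \<bar>x\<bar> < 1 / real D})"
  let ?tail = "measure (density lborel (normal_density 0 s)) {x. 1 / real D \<le> \<bar>x\<bar>}"
  interpret prob_space ?M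
    using s by (rule prob_space_gauss_mat)
  have box: "?box \<subseteq> {W \<in> space ?M. id_plus_transpose_kernel_trivial D W}"
    using D by (rule small_entries_subset_kernel_trivial)
  have "1 - exp (- real D / 2) \<le> 1 - real (D * D) * (1 / 81) ^ D"
    using square_mult_pow_le_exp[of D] by linarith
  also have "\<dots> \<le> 1 - real (D * D) * ?tail"
    using normal_tail_inverse_dim_le[OF D s small] by (intro diff_left_mono mult_left_mono) auto
  also have "\<dots> \<le> measure ?M ?box"
    using gauss_mat_small_entries_ge[OF s] .
  also have "\<dots> \<le> measure ?M {W \<in> space ?M. id_plus_transpose_kernel_trivial D W}"
    using box sets_gauss_mat_kernel_trivial by (rule finite_measure_mono)
  finally show ?thesis
    using inj_on_conv_res_complete_graph_iff[OF N] by simp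
qed

end
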